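(* Let $X$ be a topological space and let $K_n\subseteq\mathbb R^X$ for $n\in\mathbb N$. Let $\Gamma=\bigcup_{n\in\mathbb N}K_n$ and suppose that for each $n\in\mathbb N$ the set $A_n$ of points $x\in X$ at which $K_n$ is equicontinuous is a residual subset of $X$. Then $X$ is conditionally $\sigma^*_{C(X_\Gamma)}$-$\alpha$-favorable. In particular, $X$ is conditionally $\sigma^*_\Gamma$-$\alpha$-favorable.
   Context: A family $K\subseteq\mathbb R^X$ is equicontinuous at $x\in X$ if for every $\varepsilon>0$ there is a neighborhood $U$ of $x$ such that $|g(y)-g(x)|<\varepsilon$ for all $y\in U$ and all $g\in K$. A set is residual if its complement is of first category. $X_\Gamma$ denotes the set $X$ equipped with the topology generated by the functions in $\Gamma$ (the weakest topology making each $g\in\Gamma$ continuous), and $C(X_\Gamma)$ is the set of real-valued continuous functions on $X_\Gamma$, viewed as a subset of $\mathbb R^X$. For $\Lambda\subseteq\mathbb R^X$, the game $\mathcal J^*_\Lambda$ on $X$: players $\beta$ and $\alpha$ alternately choose nonempty open subsets of $X$, $V_0\supseteq U_0\supseteq V_1\supseteq U_1\supseteq\cdots$, with $\beta$ choosing the $V_n$ (starting with $V_0$) and $\alpha$ the $U_n$. Player $\alpha$ wins the play $((V_n,U_n))_n$ iff for every sequence $(a_n)$ with $a_n\in U_n$ for all $n$ and every $g\in\Lambda$ there exists $t\in\bigcap_n U_n$ with $g(t)\in\overline{\{g(a_n):n\in\mathbb N\}}$. $X$ is conditionally $\sigma^*_\Lambda$-$\alpha$-favorable if $\alpha$ has a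 strategy $\tau$ such that every play compatible with $\tau$ satisfying $\bigcap_n U_n\neq\emptyset$ is won by $\alpha$. *)

theory Defs
  imports "HOL-Analysis.Analysis"
begin

definition equicontinuous_at :: "'a topology \<Rightarrow> ('a \<Rightarrow> real) set \<Rightarrow> 'a \<Rightarrow> bool" where
  "equicontinuous_at X K x \<longleftrightarrow>
     (\<forall>\<epsilon>>0. \<exists>U. openin X U \<and> x \<in> U \<and> (\<forall>y\<in>U. \<forall>g\<in>K. \<bar>g y - g x\<bar> < \<epsilon>))"

definition nowhere_dense_in :: "'a topology \<Rightarrow> 'a set \<Rightarrow> bool" where
  "nowhere_dense_in X S \<longleftrightarrow> S \<subseteq> topspace X \<and> X interior_of (X closure_of S) = {}"

definition first_category_in :: "'a topology \<Rightarrow> 'a set \<Rightarrow> bool" where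
  "first_category_in X S \<longleftrightarrow>
     (\<exists>N :: nat \<Rightarrow> 'a set. (\<forall>n. nowhere_dense_in X (N n)) \<and> S \<subseteq> (\<Union>n. N n))"

definition residual_in :: "'a topology \<Rightarrow> 'a set \<Rightarrow> bool" where
  "residual_in X A \<longleftrightarrow> A \<subseteq> topspace X \<and> first_category_in X (topspace X - A)"

definition weak_topology :: "'a topology \<Rightarrow> ('a \<Rightarrow> real) set \<Rightarrow> 'a topology" where
  "weak_topology X \<Gamma> = topology_generated_by
     (insert (topspace X) {topspace X \<inter> g -` U | g U. g \<in> \<Gamma> \<and> open U})"

definition Cfun :: "'a topology \<Rightarrow> ('a \<Rightarrow> real) set" where
  "Cfun T = {f. continuous_map T euclideanreal f}"

text \<open>History of a play before alpha's n-th move: V0, U0, ..., V(n-1), U(n-1), Vn.\<close>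
definition history :: "(nat \<Rightarrow> 'a set) \<Rightarrow> (nat \<Rightarrow> 'a set) \<Rightarrow> nat \<Rightarrow> 'a set list" where
  "history V U n = concat (map (\<lambda>i. [V i, U i]) [0..<n]) @ [V n]"

definition partial_legal :: "'a topology \<Rightarrow> (nat \<Rightarrow> 'a set) \<Rightarrow> (nat \<Rightarrow> 'a set) \<Rightarrow> nat \<Rightarrow> bool" where
  "partial_legal X V U n \<longleftrightarrow>
     (\<forall>i<n. openin X (V i) \<and> V i \<noteq> {} \<and> openin X (U i) \<and> U i \<noteq> {} \<and> U i \<subseteq> V i
            \<and> V (Suc i) \<subseteq> U i) \<and> openin X (V n) \<and> V n \<noteq> {}"

definition legal_play :: "'a topology \<Rightarrow> (nat \<Rightarrow> 'a set) \<Rightarrow> (nat \<Rightarrow> 'a set) \<Rightarrow> bool" where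
  "legal_play X V U \<longleftrightarrow>
     (\<forall>n. openin X (V n) \<and> V n \<noteq> {} \<and> openin X (U n) \<and> U n \<noteq> {} \<and> U n \<subseteq> V n
          \<and> V (Suc n) \<subseteq> U n)"

definition alpha_strategy :: "'a topology \<Rightarrow> ('a set list \<Rightarrow> 'a set) \<Rightarrow> bool" where
  "alpha_strategy X \<tau> \<longleftrightarrow>
     (\<forall>V U n. partial_legal X V U n \<and> (\<forall>i<n. U i = \<tau> (history V U i)) \<longrightarrow>
        openin X (\<tau> (history V U n)) \<and> \<tau> (history V U n) \<noteq> {} \<and> \<tau> (history V U n) \<subseteq> V n)"

definition compatible :: "('a set list \<Rightarrow> 'a set) \<Rightarrow> (nat \<Rightarrow> 'a set) \<Rightarrow> (nat \<Rightarrow> 'a set) \<Rightarrow> bool" where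
  "compatible \<tau> V U \<longleftrightarrow> (\<forall>n. U n = \<tau> (history V U n))"

definition alpha_wins :: "('a \<Rightarrow> real) set \<Rightarrow> (nat \<Rightarrow> 'a set) \<Rightarrow> bool" where
  "alpha_wins \<Lambda> U \<longleftrightarrow>
     (\<forall>a g. (\<forall>n. a n \<in> U n) \<longrightarrow> g \<in> \<Lambda> \<longrightarrow>
        (\<exists>t \<in> (\<Inter>n. U n). g t \<in> closure (range (\<lambda>n. g (a n)))))"

definition cond_sigma_star_alpha_favorable :: "'a topology \<Rightarrow> ('a \<Rightarrow> real) set \<Rightarrow> bool" where
  "cond_sigma_star_alpha_favorable X \<Lambda> \<longleftrightarrow>
     (\<exists>\<tau>. alpha_strategy X \<tau> \<and>
        (\<forall>V U. legal_play X V U \<and> compatible \<tau> V U \<and> (\<Inter>n. U n) \<noteq> {} \<longrightarrow> alpha_wins \<Lambda> U))"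

end

theory Submission
  imports Defs
begin

text \<open>
  After discarding the closures of countably many nowhere dense sets, alpha can steer the play
  into points at which every \<open>K m\<close> is equicontinuous.  In round \<open>n\<close>, alpha removes the
  closure of the \<open>n\<close>-th nowhere dense set from beta's move and, if this leaves a point at which
  \<open>K 0 \<union> \<dots> \<union> K n\<close> is equicontinuous, shrinks to a neighbourhood of it on which every function
  of that family oscillates by less than \<open>1/(n+1)\<close>.  Any point \<open>t\<close> of the intersection of
  alpha's moves avoids all discarded sets, so the neighbourhood was chosen in every round, and
  then \<open>g (a n) \<longrightarrow> g t\<close> for every \<open>g \<in> \<Gamma>\<close> and every selection \<open>a n \<in> U n\<close>.  Thus
  \<open>a n \<longrightarrow> t\<close> in \<open>X\<^sub>\<Gamma>\<close>, which gives \<open>f (a n) \<longrightarrow> f t\<close> for all \<open>f \<in> C(X\<^sub>\<Gamma>)\<close>.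
\<close>

lemma equicontinuous_at_UN:
  assumes "finite I" "\<And>i. i \<in> I \<Longrightarrow> equicontinuous_at X (K i) x" "x \<in> topspace X"
  shows "equicontinuous_at X (\<Union>i\<in>I. K i) x"
  using assms(1,2)
proof (induction I rule: finite_induct)
  case empty
  have "openin X (topspace X)" by simp
  then show ?case
    unfolding equicontinuous_at_def using assms(3) by blast
next
  case (insert i I)
  show ?case
    unfolding equicontinuous_at_def
  proof (intro allI impI)
    fix e :: real assume "e > 0"
    have "equicontinuous_at X (K i) x" "equicontinuous_at X (\<Union>i\<in>I. K i) x"
      using insert by simp_all
    then obtain U1 U2 where
      U1: "openin X U1" "x \<in> U1" "\<forall>y\<in>U1. \<forall>g\<in>K i. \<bar>g y - g x\<bar> < e" and
      U2: "openin X U2" "x \<in> U2" "\<forall>y\<in>U2. \<forall>g\<in>(\<Union>i\<in>I. K i). \<bar>g y - g x\<bar> < e"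
      using \<open>e > 0\<close> unfolding equicontinuous_at_def by meson
    show "\<exists>U. openin X U \<and> x \<in> U \<and> (\<forall>y\<in>U. \<forall>g\<in>(\<Union>i\<in>insert i I. K i). \<bar>g y - g x\<bar> < e)"
      by (rule exI[of _ "U1 \<inter> U2"]) (use U1 U2 in auto)
  qed
qed

lemma first_category_in_UN:
  assumes "\<And>n::nat. first_category_in X (S n)"
  shows "first_category_in X (\<Union>n. S n)"
proof -
  have ex: "\<forall>n. \<exists>N. (\<forall>k::nat. nowhere_dense_in X (N k)) \<and> S n \<subseteq> (\<Union>k. N k)"
    using assms unfolding first_category_in_def by simp
  from choice[OF ex] obtain N
    where "\<forall>n. (\<forall>k::nat. nowhere_dense_in X (N n k)) \<and> S n \<subseteq> (\<Union>k. N n k)" ..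
  then have N: "\<And>n k. nowhere_dense_in X (N n k)" "\<And>n. S n \<subseteq> (\<Union>k. N n k)"
    by simp_all
  define M where "M j = (case prod_decode j of (n, k) \<Rightarrow> N n k)" for j
  have "(\<Union>n. S n) \<subseteq> (\<Union>j. M j)"
  proof
    fix x assume "x \<in> (\<Union>n. S n)"
    then obtain n k where "x \<in> N n k" using N(2) by blast
    then show "x \<in> (\<Union>j. M j)"
      unfolding M_def by (intro UN_I[of "prod_encode (n, k)"]) auto
  qed
  moreover have "nowhere_dense_in X (M j)" for j
    using N(1) by (simp add: M_def split: prod.split)
  ultimately show ?thesis
    unfolding first_category_in_def by blast
qed

lemma residual_in_INT:
  assumes "\<And>n::nat. residual_in X (A n)"
  shows "residual_in X (\<Inter>n. A n)"
proof -
  have "topspace X - (\<Inter>n. A n) = (\<Union>n. topspace X - A n)"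
    by blast
  then show ?thesis
    using assms first_category_in_UN[of X "\<lambda>n. topspace X - A n"]
    unfolding residual_in_def by auto
qed

lemma residual_inE:
  assumes "residual_in X A"
  obtains D :: "nat \<Rightarrow> 'a set"
  where "\<And>k. nowhere_dense_in X (D k)" "topspace X - (\<Union>k. D k) \<subseteq> A"
  using assms unfolding residual_in_def first_category_in_def by blast

lemma diff_closure_of_nowhere_dense_nonempty:
  assumes "openin X V" "V \<noteq> {}" "nowhere_dense_in X N"
  shows "V - X closure_of N \<noteq> {}"
proof
  assume "V - X closure_of N = {}"
  then have "V \<subseteq> X interior_of (X closure_of N)"
    using assms(1) by (intro interior_of_maximal) auto
  then show False
    using assms(2,3) unfolding nowhere_dense_in_def by simp
qed

lemma exists_move_of_small_oscillation:
  assumes "openin X V" "V \<noteq> {}" "nowhere_dense_in X N" "\<epsilon> > 0"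
  obtains R where "openin X R" "R \<noteq> {}" "R \<subseteq> V - X closure_of N"
    "(\<exists>x\<in>R. equicontinuous_at X F x) \<Longrightarrow> \<forall>g\<in>F. \<forall>y\<in>R. \<forall>z\<in>R. \<bar>g y - g z\<bar> < \<epsilon>"
proof -
  let ?W = "V - X closure_of N"
  have W: "openin X ?W" "?W \<noteq> {}"
    using assms diff_closure_of_nowhere_dense_nonempty by auto
  show ?thesis
  proof (cases "\<exists>x\<in>?W. equicontinuous_at X F x")
    case True
    then obtain x where x: "x \<in> ?W" "equicontinuous_at X F x"
      by blast
    then obtain Q where Q: "openin X Q" "x \<in> Q" "\<forall>y\<in>Q. \<forall>g\<in>F. \<bar>g y - g x\<bar> < \<epsilon> / 2"
      using assms(4) unfolding equicontinuous_at_def by (meson half_gt_zero)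
    have "\<bar>g y - g z\<bar> < \<epsilon>" if "g \<in> F" "y \<in> Q" "z \<in> Q" for g y z
    proof -
      have "\<bar>g y - g x\<bar> < \<epsilon> / 2" "\<bar>g z - g x\<bar> < \<epsilon> / 2"
        using Q(3) that by auto
      then show ?thesis by linarith
    qed
    then show ?thesis
      by (intro that[of "?W \<inter> Q"]) (use W(1) Q(1,2) x(1) in auto)
  next
    case False
    then show ?thesis
      using that W by blast
  qed
qed

lemma length_history: "length (history V U n) = Suc (2 * n)"
  by (induction n) (simp_all add: history_def)

lemma last_history: "last (history V U n) = V n"
  by (simp add: history_def)

lemma alpha_strategy_positional:
  assumes "\<And>n V. openin X V \<Longrightarrow> V \<noteq> {} \<Longrightarrow> openin X (R n V) \<and> R n V \<noteq> {} \<and> R n V \<subseteq> V"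
  shows "alpha_strategy X (\<lambda>h. R ((length h - 1) div 2) (last h))"
  using assms unfolding alpha_strategy_def partial_legal_def
  by (simp add: length_history last_history)

lemma compatible_positional:
  "compatible (\<lambda>h. R ((length h - 1) div 2) (last h)) V U \<longleftrightarrow> (\<forall>n. U n = R n (V n))"
  by (simp add: compatible_def length_history last_history)

lemma limitin_topology_generated_by:
  assumes "l \<in> \<Union>\<S>" "\<And>s. s \<in> \<S> \<Longrightarrow> l \<in> s \<Longrightarrow> eventually (\<lambda>x. f x \<in> s) F"
  shows "limitin (topology_generated_by \<S>) f l F"
proof -
  have "l \<in> S \<longrightarrow> eventually (\<lambda>x. f x \<in> S) F" if "generate_topology_on \<S> S" for S
    using that
  proof induction
    case (UN K)
    show ?case
    proof
      assume "l \<in> \<Union>K"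
      then obtain k where "k \<in> K" "l \<in> k" by blast
      then have "eventually (\<lambda>x. f x \<in> k) F"
        using UN.IH by blast
      then show "eventually (\<lambda>x. f x \<in> \<Union>K) F"
        by (rule eventually_mono) (use \<open>k \<in> K\<close> in blast)
    qed
  qed (use assms(2) eventually_conj in auto)
  then show ?thesis
    using assms(1) unfolding limitin_def by (auto dest: openin_topology_generated_by)
qed

lemma limitin_weak_topology:
  assumes "l \<in> topspace X" "\<And>x. f x \<in> topspace X"
    and "\<And>g. g \<in> \<Gamma> \<Longrightarrow> ((\<lambda>x. g (f x)) \<longlongrightarrow> g l) F"
  shows "limitin (weak_topology X \<Gamma>) f l F"
  unfolding weak_topology_def
proof (rule limitin_topology_generated_by)
  show "l \<in> \<Union>(insert (topspace X) {topspace X \<inter> g -` U | g U. g \<in> \<Gamma> \<and> open U})"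
    using assms(1) by blast
next
  fix s assume s: "s \<in> insert (topspace X) {topspace X \<inter> g -` U | g U. g \<in> \<Gamma> \<and> open U}"
    and "l \<in> s"
  from s consider "s = topspace X" | g U where "s = topspace X \<inter> g -` U" "g \<in> \<Gamma>" "open U"
    by blast
  then show "eventually (\<lambda>x. f x \<in> s) F"
  proof cases
    case 1
    then show ?thesis using assms(2) by simp
  next
    case 2
    then have "eventually (\<lambda>x. g (f x) \<in> U) F"
      using topological_tendstoD[OF assms(3)] \<open>l \<in> s\<close> by blast
    then show ?thesis
      using 2 assms(2) by (auto elim: eventually_mono)
  qed
qed

lemma alpha_wins_if_tendsto:
  assumes "t \<in> (\<Inter>n. U n)"
    and "\<And>a g. \<forall>n. a n \<in> U n \<Longrightarrow> g \<in> \<Lambda> \<Longrightarrow> ((\<lambda>n. g (a n)) \<longlongrightarrow> g t) sequentially"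
  shows "alpha_wins \<Lambda> U"
  unfolding alpha_wins_def
proof (intro allI impI)
  fix a g assume "\<forall>n. a n \<in> U n" "g \<in> \<Lambda>"
  then have "((\<lambda>n. g (a n)) \<longlongrightarrow> g t) sequentially"
    using assms(2) by blast
  then show "\<exists>t\<in>(\<Inter>n. U n). g t \<in> closure (range (\<lambda>n. g (a n)))"
    unfolding closure_sequential by (intro bexI[OF _ assms(1)] exI[of _ "\<lambda>n. g (a n)"]) auto
qed

lemma alpha_wins_Cfun_weak_topology:
  assumes "t \<in> (\<Inter>n. U n)" "\<And>n. U n \<subseteq> topspace X"
    and "\<And>a g. \<forall>n. a n \<in> U n \<Longrightarrow> g \<in> \<Gamma> \<Longrightarrow> ((\<lambda>n. g (a n)) \<longlongrightarrow> g t) sequentially"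
  shows "alpha_wins (Cfun (weak_topology X \<Gamma>)) U"
proof (rule alpha_wins_if_tendsto[OF assms(1)])
  fix a f assume a: "\<forall>n. a n \<in> U n" and f: "f \<in> Cfun (weak_topology X \<Gamma>)"
  have "limitin (weak_topology X \<Gamma>) a t sequentially"
    using assms a by (intro limitin_weak_topology) blast+
  then show "((\<lambda>n. f (a n)) \<longlongrightarrow> f t) sequentially"
    using continuous_map_limit[of _ euclideanreal f] f by (simp add: Cfun_def o_def)
qed

definition oscillation_move ::
    "'a topology \<Rightarrow> (nat \<Rightarrow> 'a set) \<Rightarrow> (nat \<Rightarrow> ('a \<Rightarrow> real) set) \<Rightarrow> nat \<Rightarrow> 'a set \<Rightarrow> 'a set \<Rightarrow> bool"
  where "oscillation_move X D K n V W \<longleftrightarrow>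
    openin X W \<and> W \<noteq> {} \<and> W \<subseteq> V - X closure_of D n \<and>
    ((\<exists>x\<in>W. equicontinuous_at X (\<Union>m\<le>n. K m) x) \<longrightarrow>
      (\<forall>g\<in>(\<Union>m\<le>n. K m). \<forall>y\<in>W. \<forall>z\<in>W. \<bar>g y - g z\<bar> < 1 / real (Suc n)))"

lemma exists_oscillation_move:
  assumes "openin X V" "V \<noteq> {}" "nowhere_dense_in X (D n)"
  shows "\<exists>W. oscillation_move X D K n V W"
proof -
  obtain W where "openin X W" "W \<noteq> {}" "W \<subseteq> V - X closure_of D n"
    "(\<exists>x\<in>W. equicontinuous_at X (\<Union>m\<le>n. K m) x) \<Longrightarrow>
      \<forall>g\<in>(\<Union>m\<le>n. K m). \<forall>y\<in>W. \<forall>z\<in>W. \<bar>g y - g z\<bar> < 1 / real (Suc n)"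
    by (rule exists_move_of_small_oscillation[OF assms,
          where \<epsilon> = "1 / real (Suc n)" and F = "\<Union>m\<le>n. K m"]) (simp, blast)
  then show ?thesis
    unfolding oscillation_move_def by blast
qed

lemma oscillation_move_legal:
  "oscillation_move X D K n V W \<Longrightarrow> openin X W \<and> W \<noteq> {} \<and> W \<subseteq> V"
  unfolding oscillation_move_def by blast

lemma tendsto_along_oscillation_play:
  assumes equi: "\<And>x m. x \<in> topspace X - (\<Union>k. D k) \<Longrightarrow> equicontinuous_at X (K m) x"
    and moves: "\<And>n. oscillation_move X D K n (V n) (U n)"
    and t: "t \<in> (\<Inter>n. U n)" and a: "\<And>n. a n \<in> U n" and g: "g \<in> K m"
  shows "((\<lambda>n. g (a n)) \<longlongrightarrow> g t) sequentially"
proof -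
  have "U n \<subseteq> topspace X - X closure_of (D n)" for n
    using moves[of n] openin_subset[of X "U n"] unfolding oscillation_move_def by blast
  then have "t \<in> topspace X" "t \<notin> X closure_of (D k)" for k
    using t by blast+
  then have "t \<in> topspace X - (\<Union>k. D k)"
    using closure_of_subset_Int by fastforce
  then have equi_t: "equicontinuous_at X (\<Union>m\<le>n. K m) t" for n
    by (intro equicontinuous_at_UN equi) auto
  have "\<bar>g (a n) - g t\<bar> < 1 / real (Suc n)" if "m \<le> n" for n
  proof -
    have "\<forall>g\<in>(\<Union>m\<le>n. K m). \<forall>y\<in>U n. \<forall>z\<in>U n. \<bar>g y - g z\<bar> < 1 / real (Suc n)"
      using moves[of n] t equi_t[of n]
      unfolding oscillation_move_def by blast
    then show ?thesis
      using a[of n] t g that by blast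
  qed
  then have "eventually (\<lambda>n. norm (g (a n) - g t) \<le> inverse (real (Suc n))) sequentially"
    unfolding eventually_sequentially by (auto simp: inverse_eq_divide intro!: less_imp_le)
  then have "((\<lambda>n. g (a n) - g t) \<longlongrightarrow> 0) sequentially"
    by (rule Lim_null_comparison[OF _ LIMSEQ_inverse_real_of_nat])
  then show ?thesis
    by (simp add: LIM_zero_iff)
qed

lemma alpha_wins_oscillation_play:
  assumes equi: "\<And>x m. x \<in> topspace X - (\<Union>k. D k) \<Longrightarrow> equicontinuous_at X (K m) x"
    and moves: "\<And>n. oscillation_move X D K n (V n) (U n)"
    and "(\<Inter>n. U n) \<noteq> {}"
  shows "alpha_wins (Cfun (weak_topology X (\<Union>n. K n))) U \<and> alpha_wins (\<Union>n. K n) U"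
proof -
  obtain t where t: "t \<in> (\<Inter>n. U n)"
    using assms(3) by blast
  have tendsto: "((\<lambda>n. g (a n)) \<longlongrightarrow> g t) sequentially"
    if a: "\<forall>n. a n \<in> U n" and g: "g \<in> (\<Union>n. K n)" for a g
  proof -
    obtain m where m: "g \<in> K m"
      using g by blast
    show ?thesis
      using tendsto_along_oscillation_play[OF equi moves t _ m] a by blast
  qed
  have "U n \<subseteq> topspace X" for n
    using oscillation_move_legal[OF moves[of n]] openin_subset by blast
  then show ?thesis
    using alpha_wins_Cfun_weak_topology[OF t _ tendsto] alpha_wins_if_tendsto[OF t tendsto] by blast
qed

theorem proposition2p2:
  fixes X :: "'a topology" and K :: "nat \<Rightarrow> ('a \<Rightarrow> real) set"
  assumes "\<And>n. residual_in X {x \<in> topspace X. equicontinuous_at X (K n) x}"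
  shows "cond_sigma_star_alpha_favorable X (Cfun (weak_topology X (\<Union>n. K n)))
       \<and> cond_sigma_star_alpha_favorable X (\<Union>n. K n)"
proof -
  have "residual_in X (\<Inter>m. {x \<in> topspace X. equicontinuous_at X (K m) x})"
    using assms by (rule residual_in_INT)
  then obtain D :: "nat \<Rightarrow> 'a set" where D: "\<And>k. nowhere_dense_in X (D k)"
    and equi: "\<And>x m. x \<in> topspace X - (\<Union>k. D k) \<Longrightarrow> equicontinuous_at X (K m) x"
    by (elim residual_inE) blast
  define R where "R n V = (SOME W. oscillation_move X D K n V W)" for n V
  have R: "oscillation_move X D K n V (R n V)" if "openin X V" "V \<noteq> {}" for n V
    unfolding R_def using exists_oscillation_move[OF that D] by (rule someI_ex)
  define \<tau> where "\<tau> h = R ((length h - 1) div 2) (last h)" for h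
  have "alpha_strategy X \<tau>"
    unfolding \<tau>_def
    by (rule alpha_strategy_positional) (rule oscillation_move_legal[OF R])
  moreover have "alpha_wins (Cfun (weak_topology X (\<Union>n. K n))) U \<and> alpha_wins (\<Union>n. K n) U"
    if play: "legal_play X V U" "compatible \<tau> V U" and "(\<Inter>n. U n) \<noteq> {}" for V U
  proof (rule alpha_wins_oscillation_play[OF equi _ \<open>(\<Inter>n. U n) \<noteq> {}\<close>])
    have "openin X (V n)" "V n \<noteq> {}" for n
      using play(1) unfolding legal_play_def by auto
    moreover have "U n = R n (V n)" for n
      using play(2) unfolding \<tau>_def compatible_positional by blast
    ultimately show "oscillation_move X D K n (V n) (U n)" for n
      using R by simp
  qed
  ultimately show ?thesis
    unfolding cond_sigma_star_alpha_favorable_def by blast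
qed

end
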